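(* (i) For every $n\ge 2$ there is a locally finite $n$-directed-distributive variety which is not $(2n-1)$-reversed-modular, hence not $(2n-2)$-modular. (ii) Every $n$-directed-distributive variety satisfies the congruence identity $\alpha(\beta\circ\gamma\circ\beta)\subseteq\alpha\beta\circ\alpha\gamma\circ\stackrel{2n-1}{\dots}\circ\alpha\beta$; in particular it is $(2n-1)$-modular.
   Context: Directed J\'onsson terms: ternary terms $t_0,\dots,t_n$ with $t_0(x,y,z)=x$, $t_n(x,y,z)=z$, $t_h(x,y,x)=x$ for all $0\le h\le n$, and $t_h(x,z,z)=t_{h+1}(x,x,z)$ for all $0\le h<n$. A variety is $n$-directed-distributive if it has directed J\'onsson terms $t_0,\dots,t_n$. Day terms: $4$-ary $u_0,\dots,u_m$ with $u_k(x,y,y,x)=x$ for all $k$, $u_0(x,y,z,w)=x$, $u_m(x,y,z,w)=w$, $u_k(x,x,w,w)=u_{k+1}(x,x,w,w)$ for even $k$, $u_k(x,y,y,w)=u_{k+1}(x,y,y,w)$ for odd $k$; reversed Day terms: even/odd exchanged in these last two. $m$-modular ($m$-reversed-modular): having Day (reversed Day) terms $u_0,\dots,u_m$. In congruence identities juxtaposition is intersection, $\circ$ composition, and $X\circ Y\circ\stackrel{k}{\dots}\circ Z$ is the alternating composition $X\circ Y\circ X\circ\cdots$ with $k$ factors (last factor $Z$). *)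

theory Defs
  imports Main
begin

datatype ('f, 'v) trm = Var 'v | Fun 'f "('f, 'v) trm list"

fun wf_trm :: "('f \<Rightarrow> nat) \<Rightarrow> ('f, 'v) trm \<Rightarrow> bool" where
  "wf_trm ar (Var x) = True"
| "wf_trm ar (Fun f ts) = (length ts = ar f \<and> (\<forall>t\<in>set ts. wf_trm ar t))"

fun vars_trm :: "('f, 'v) trm \<Rightarrow> 'v set" where
  "vars_trm (Var x) = {x}"
| "vars_trm (Fun f ts) = (\<Union>t\<in>set ts. vars_trm t)"

fun subst_trm :: "('v \<Rightarrow> ('f, 'w) trm) \<Rightarrow> ('f, 'v) trm \<Rightarrow> ('f, 'w) trm" where
  "subst_trm \<sigma> (Var x) = \<sigma> x"
| "subst_trm \<sigma> (Fun f ts) = Fun f (map (subst_trm \<sigma>) ts)"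

text \<open>A variety of signature ar is presented by a set E of identities between
  well-formed terms in the variables 0,1,2,...\<close>

definition variety :: "('f \<Rightarrow> nat) \<Rightarrow> (('f, nat) trm \<times> ('f, nat) trm) set \<Rightarrow> bool" where
  "variety ar E \<longleftrightarrow> (\<forall>(s, t)\<in>E. wf_trm ar s \<and> wf_trm ar t)"

text \<open>Identities holding in the variety: the equational theory generated by E
  (equal, by Birkhoff's completeness theorem, to the identities valid in all members).\<close>

inductive eqth :: "('f \<Rightarrow> nat) \<Rightarrow> (('f, nat) trm \<times> ('f, nat) trm) set
    \<Rightarrow> ('f, nat) trm \<Rightarrow> ('f, nat) trm \<Rightarrow> bool"
  for ar E where
  eq_refl: "wf_trm ar t \<Longrightarrow> eqth ar E t t"
| eq_sym: "eqth ar E s t \<Longrightarrow> eqth ar E t s"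
| eq_trans: "eqth ar E s t \<Longrightarrow> eqth ar E t u \<Longrightarrow> eqth ar E s u"
| eq_ax: "(s, t) \<in> E \<Longrightarrow> (\<forall>x. wf_trm ar (\<sigma> x)) \<Longrightarrow>
            eqth ar E (subst_trm \<sigma> s) (subst_trm \<sigma> t)"
| eq_cong: "length ss = ar f \<Longrightarrow> list_all2 (eqth ar E) ss ts \<Longrightarrow>
            eqth ar E (Fun f ss) (Fun f ts)"

type_synonym ('a, 'f) alg = "'a set \<times> ('f \<Rightarrow> 'a list \<Rightarrow> 'a)"

definition is_alg :: "('f \<Rightarrow> nat) \<Rightarrow> ('a, 'f) alg \<Rightarrow> bool" where
  "is_alg ar A \<longleftrightarrow> (\<forall>f xs. length xs = ar f \<and> set xs \<subseteq> fst A \<longrightarrow> snd A f xs \<in> fst A)"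

fun eval_trm :: "('a, 'f) alg \<Rightarrow> ('v \<Rightarrow> 'a) \<Rightarrow> ('f, 'v) trm \<Rightarrow> 'a" where
  "eval_trm A \<rho> (Var x) = \<rho> x"
| "eval_trm A \<rho> (Fun f ts) = snd A f (map (eval_trm A \<rho>) ts)"

definition in_variety :: "('f \<Rightarrow> nat) \<Rightarrow> (('f, nat) trm \<times> ('f, nat) trm) set \<Rightarrow> ('a, 'f) alg \<Rightarrow> bool" where
  "in_variety ar E A \<longleftrightarrow> is_alg ar A \<and>
     (\<forall>(s, t)\<in>E. \<forall>\<rho>. (\<forall>x. \<rho> x \<in> fst A) \<longrightarrow> eval_trm A \<rho> s = eval_trm A \<rho> t)"

definition congruence :: "('f \<Rightarrow> nat) \<Rightarrow> ('a, 'f) alg \<Rightarrow> ('a \<times> 'a) set \<Rightarrow> bool" where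
  "congruence ar A \<theta> \<longleftrightarrow> equiv (fst A) \<theta> \<and>
     (\<forall>f xs ys. length xs = ar f \<and> list_all2 (\<lambda>a b. (a, b) \<in> \<theta>) xs ys
        \<longrightarrow> (snd A f xs, snd A f ys) \<in> \<theta>)"

text \<open>Alternating relational composition X o Y o X o ... with k factors (k \<ge> 1).\<close>
fun alt_comp :: "('a \<times> 'a) set \<Rightarrow> ('a \<times> 'a) set \<Rightarrow> nat \<Rightarrow> ('a \<times> 'a) set" where
  "alt_comp X Y 0 = Id"
| "alt_comp X Y (Suc 0) = X"
| "alt_comp X Y (Suc (Suc k)) = X O alt_comp Y X (Suc k)"

text \<open>Terms in the variables 0..k-1; the variety is locally finite iff every
  finitely generated free algebra F_V(k) (terms in k variables modulo the
  equational theory) is finite.\<close>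
definition trms_in :: "('f \<Rightarrow> nat) \<Rightarrow> nat \<Rightarrow> ('f, nat) trm set" where
  "trms_in ar k = {t. wf_trm ar t \<and> vars_trm t \<subseteq> {..<k}}"

definition locally_finite :: "('f \<Rightarrow> nat) \<Rightarrow> (('f, nat) trm \<times> ('f, nat) trm) set \<Rightarrow> bool" where
  "locally_finite ar E \<longleftrightarrow>
     (\<forall>k. finite ((\<lambda>t. {s \<in> trms_in ar k. eqth ar E s t}) ` trms_in ar k))"

abbreviation (input) "vx \<equiv> Var (0::nat)"
abbreviation (input) "vy \<equiv> Var (1::nat)"
abbreviation (input) "vz \<equiv> Var (2::nat)"
abbreviation (input) "vw \<equiv> Var (3::nat)"

definition app3 :: "('f, nat) trm \<Rightarrow> ('f, nat) trm \<Rightarrow> ('f, nat) trm \<Rightarrow> ('f, nat) trm \<Rightarrow> ('f, nat) trm" where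
  "app3 t a b c = subst_trm (\<lambda>i. if i = 0 then a else if i = 1 then b else c) t"

definition app4 :: "('f, nat) trm \<Rightarrow> ('f, nat) trm \<Rightarrow> ('f, nat) trm \<Rightarrow> ('f, nat) trm \<Rightarrow> ('f, nat) trm \<Rightarrow> ('f, nat) trm" where
  "app4 t a b c d = subst_trm (\<lambda>i. if i = 0 then a else if i = 1 then b else if i = 2 then c else d) t"

text \<open>n-directed-distributive: directed Jonsson terms t_0..t_n (ternary terms in x=0,y=1,z=2).\<close>
definition directed_jonsson :: "('f \<Rightarrow> nat) \<Rightarrow> (('f, nat) trm \<times> ('f, nat) trm) set \<Rightarrow> nat \<Rightarrow> bool" where
  "directed_jonsson ar E n \<longleftrightarrow> (\<exists>t :: nat \<Rightarrow> ('f, nat) trm.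
     (\<forall>h\<le>n. t h \<in> trms_in ar 3) \<and>
     eqth ar E (t 0) vx \<and> eqth ar E (t n) vz \<and>
     (\<forall>h\<le>n. eqth ar E (app3 (t h) vx vy vx) vx) \<and>
     (\<forall>h<n. eqth ar E (app3 (t h) vx vz vz) (app3 (t (Suc h)) vx vx vz)))"

text \<open>m-modular: Day terms u_0..u_m (4-ary terms in x=0,y=1,z=2,w=3).\<close>
definition day_modular :: "('f \<Rightarrow> nat) \<Rightarrow> (('f, nat) trm \<times> ('f, nat) trm) set \<Rightarrow> nat \<Rightarrow> bool" where
  "day_modular ar E m \<longleftrightarrow> (\<exists>u :: nat \<Rightarrow> ('f, nat) trm.
     (\<forall>k\<le>m. u k \<in> trms_in ar 4) \<and>
     (\<forall>k\<le>m. eqth ar E (app4 (u k) vx vy vy vx) vx) \<and>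
     eqth ar E (u 0) vx \<and> eqth ar E (u m) vw \<and>
     (\<forall>k<m. even k \<longrightarrow> eqth ar E (app4 (u k) vx vx vw vw) (app4 (u (Suc k)) vx vx vw vw)) \<and>
     (\<forall>k<m. odd k \<longrightarrow> eqth ar E (app4 (u k) vx vy vy vw) (app4 (u (Suc k)) vx vy vy vw)))"

text \<open>m-reversed-modular: reversed Day terms (even/odd exchanged).\<close>
definition reversed_modular :: "('f \<Rightarrow> nat) \<Rightarrow> (('f, nat) trm \<times> ('f, nat) trm) set \<Rightarrow> nat \<Rightarrow> bool" where
  "reversed_modular ar E m \<longleftrightarrow> (\<exists>u :: nat \<Rightarrow> ('f, nat) trm.
     (\<forall>k\<le>m. u k \<in> trms_in ar 4) \<and>
     (\<forall>k\<le>m. eqth ar E (app4 (u k) vx vy vy vx) vx) \<and>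
     eqth ar E (u 0) vx \<and> eqth ar E (u m) vw \<and>
     (\<forall>k<m. odd k \<longrightarrow> eqth ar E (app4 (u k) vx vx vw vw) (app4 (u (Suc k)) vx vx vw vw)) \<and>
     (\<forall>k<m. even k \<longrightarrow> eqth ar E (app4 (u k) vx vy vy vw) (app4 (u (Suc k)) vx vy vy vw)))"

end

theory Submission
  imports Defs "HOL-Library.FuncSet"
begin

text \<open>
  (ii) Let \<open>t\<^sub>0, \<dots>, t\<^sub>n\<close> be directed Jonsson terms, \<open>a \<beta> b \<gamma> c \<beta> d\<close> and \<open>a \<alpha> d\<close>. All elements
  \<open>t\<^sub>h(a, u, d)\<close> lie in the \<open>\<alpha>\<close>-class of \<open>a\<close>, and
  \<open>t\<^sub>h(a,a,d) \<beta> t\<^sub>h(a,b,d) \<gamma> t\<^sub>h(a,c,d) \<beta> t\<^sub>h(a,d,d) = t\<^sub>h\<^sub>+\<^sub>1(a,a,d)\<close>. Chaining these links from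
  \<open>t\<^sub>1(a,a,d) = a\<close> to \<open>t\<^sub>n(a,a,d) = d\<close> and merging adjacent \<open>\<alpha>\<beta>\<close>-steps gives \<open>2n - 1\<close> factors.

  (i) The algebra \<open>dd_alg n\<close> lives on pairs \<open>(p, q)\<close> with \<open>0 \<le> p \<le> n - 1\<close> and \<open>q\<close> either
  undefined (\<open>None\<close>) or in \<open>{p, p + 1}\<close>; its operations \<open>t\<^sub>1, \<dots>, t\<^sub>n\<^sub>-\<^sub>1\<close> make it
  \<open>n\<close>-directed-distributive, and the kernels of \<open>fst\<close>, of \<open>snd\<close> and of "\<open>q\<close> is undefined" are
  congruences. Reversed Day terms applied to \<open>(0, 0), (0, None), (n - 1, None), (n - 1, n)\<close> would
  give a chain from \<open>(0, 0)\<close> to \<open>(n - 1, n)\<close> along which \<open>q\<close> stays defined, is kept at even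
  steps and, since \<open>q \<in> {p, p + 1}\<close> while \<open>p\<close> is kept at odd steps, grows by at most one at odd
  steps; so it cannot reach \<open>n\<close> within \<open>2n - 1\<close> steps. As \<open>m\<close>-modularity implies
  \<open>(m + 1)\<close>-reversed-modularity, the variety is not \<open>(2n - 2)\<close>-modular either. It is generated by a
  finite algebra, hence locally finite.
\<close>

section \<open>Equational logic\<close>

lemma wf_subst_trm:
  "wf_trm ar t \<Longrightarrow> (\<And>x. wf_trm ar (\<sigma> x)) \<Longrightarrow> wf_trm ar (subst_trm \<sigma> t)"
  by (induction t) auto

lemma subst_trm_subst_trm:
  "subst_trm \<sigma> (subst_trm \<tau> t) = subst_trm (\<lambda>x. subst_trm \<sigma> (\<tau> x)) t"
  by (induction t) auto

lemma subst_trm_Var [simp]: "subst_trm Var t = t"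
  by (induction t) (auto simp: map_idI)

lemma vars_subst_trm: "vars_trm (subst_trm \<sigma> t) = (\<Union>x\<in>vars_trm t. vars_trm (\<sigma> x))"
  by (induction t) auto

lemma eval_subst_trm:
  "eval_trm A \<rho> (subst_trm \<sigma> t) = eval_trm A (\<lambda>x. eval_trm A \<rho> (\<sigma> x)) t"
  by (induction t) (auto simp: comp_def intro!: arg_cong[where f = "snd A _"])

lemma eval_trm_cong_vars:
  "(\<And>x. x \<in> vars_trm t \<Longrightarrow> \<rho> x = \<rho>' x) \<Longrightarrow> eval_trm A \<rho> t = eval_trm A \<rho>' t"
proof (induction t)
  case (Fun f ts)
  then show ?case by (auto intro!: arg_cong[where f = "snd A f"] map_cong)
qed simp

lemma eval_trm_closed:
  assumes "is_alg ar A" "wf_trm ar t" "\<And>x. \<rho> x \<in> fst A"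
  shows "eval_trm A \<rho> t \<in> fst A"
  using assms(2)
proof (induction t)
  case (Fun f ts)
  then have "set (map (eval_trm A \<rho>) ts) \<subseteq> fst A" by auto
  with Fun.prems assms(1) show ?case unfolding is_alg_def by auto
qed (use assms(3) in simp)

lemma eval_trm_congruence:
  assumes "congruence ar A \<theta>" "wf_trm ar t" "\<And>x. (\<rho> x, \<rho>' x) \<in> \<theta>"
  shows "(eval_trm A \<rho> t, eval_trm A \<rho>' t) \<in> \<theta>"
  using assms(2)
proof (induction t)
  case (Fun f ts)
  then have "list_all2 (\<lambda>a b. (a, b) \<in> \<theta>) (map (eval_trm A \<rho>) ts) (map (eval_trm A \<rho>') ts)"
    by (auto simp: list_all2_conv_all_nth)
  with Fun.prems assms(1) show ?case unfolding congruence_def by auto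
qed (use assms(3) in simp)

lemma eqth_subst_trm:
  "eqth ar E s t \<Longrightarrow> (\<And>x. wf_trm ar (\<sigma> x)) \<Longrightarrow> eqth ar E (subst_trm \<sigma> s) (subst_trm \<sigma> t)"
proof (induction rule: eqth.induct)
  case (eq_refl t)
  then show ?case by (auto intro!: eqth.eq_refl wf_subst_trm)
next
  case (eq_ax s t \<tau>)
  then show ?case
    using eqth.eq_ax[where \<sigma> = "\<lambda>x. subst_trm \<sigma> (\<tau> x)" and ar = ar and E = E]
    by (simp add: subst_trm_subst_trm wf_subst_trm)
next
  case (eq_cong ss f ts)
  then show ?case
    by (auto intro!: eqth.eq_cong simp: list_all2_map1 list_all2_map2 elim: list_all2_mono)
qed (auto intro: eqth.eq_sym eqth.eq_trans)

lemma eqth_sound: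
  assumes "eqth ar E s t" "in_variety ar E A" "\<And>x. \<rho> x \<in> fst A"
  shows "eval_trm A \<rho> s = eval_trm A \<rho> t"
  using assms
proof (induction arbitrary: \<rho> rule: eqth.induct)
  case (eq_ax s t \<sigma>)
  have "eval_trm A \<rho> (\<sigma> x) \<in> fst A" for x
    using eq_ax eval_trm_closed[of ar A] by (auto simp: in_variety_def)
  with eq_ax show ?case by (auto simp: eval_subst_trm in_variety_def)
next
  case (eq_cong ss f ts)
  then have "map (eval_trm A \<rho>) ss = map (eval_trm A \<rho>) ts"
    by (auto simp: list_all2_conv_all_nth intro!: nth_equalityI)
  then show ?case by simp
qed auto

lemma eval_app3:
  "eval_trm A \<rho> (app3 t a b c) =
   eval_trm A (\<lambda>i. if i = 0 then eval_trm A \<rho> a else if i = 1 then eval_trm A \<rho> b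
                    else eval_trm A \<rho> c) t"
  unfolding app3_def eval_subst_trm by (rule arg_cong[where f = "\<lambda>r. eval_trm A r t"]) auto

lemma eval_app4:
  "eval_trm A \<rho> (app4 t a b c d) =
   eval_trm A (\<lambda>i. if i = 0 then eval_trm A \<rho> a else if i = 1 then eval_trm A \<rho> b
                    else if i = 2 then eval_trm A \<rho> c else eval_trm A \<rho> d) t"
  unfolding app4_def eval_subst_trm by (rule arg_cong[where f = "\<lambda>r. eval_trm A r t"]) auto

lemma app4_app3:
  "app4 (app3 t a b c) p q r s = app3 t (app4 a p q r s) (app4 b p q r s) (app4 c p q r s)"
  unfolding app3_def app4_def subst_trm_subst_trm
  by (rule arg_cong[where f = "\<lambda>\<sigma>. subst_trm \<sigma> t"]) auto

lemma subst_trm_app3: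
  "subst_trm \<sigma> (app3 t a b c) = app3 t (subst_trm \<sigma> a) (subst_trm \<sigma> b) (subst_trm \<sigma> c)"
  unfolding app3_def subst_trm_subst_trm
  by (rule arg_cong[where f = "\<lambda>\<sigma>. subst_trm \<sigma> t"]) auto

lemma app4_Var [simp]:
  "app4 (Var i) p q r s = (if i = 0 then p else if i = 1 then q else if i = 2 then r else s)"
  by (simp add: app4_def)

lemma app3_in_trms_in:
  assumes "t \<in> trms_in ar 3" "a \<in> trms_in ar k" "b \<in> trms_in ar k" "c \<in> trms_in ar k"
  shows "app3 t a b c \<in> trms_in ar k"
  using assms unfolding app3_def trms_in_def by (auto intro!: wf_subst_trm simp: vars_subst_trm split: if_splits)

definition identities_of :: "('f \<Rightarrow> nat) \<Rightarrow> ('a, 'f) alg \<Rightarrow> (('f, nat) trm \<times> ('f, nat) trm) set" where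
  "identities_of ar A = {(s, t). wf_trm ar s \<and> wf_trm ar t \<and>
     (\<forall>\<rho>. (\<forall>x. \<rho> x \<in> fst A) \<longrightarrow> eval_trm A \<rho> s = eval_trm A \<rho> t)}"

lemma variety_identities_of: "variety ar (identities_of ar A)"
  by (auto simp: variety_def identities_of_def)

lemma in_variety_identities_of: "is_alg ar A \<Longrightarrow> in_variety ar (identities_of ar A) A"
  by (auto simp: in_variety_def identities_of_def)

lemma eqth_identities_of_iff:
  assumes "is_alg ar A" "wf_trm ar s" "wf_trm ar t"
  shows "eqth ar (identities_of ar A) s t \<longleftrightarrow>
         (\<forall>\<rho>. (\<forall>x. \<rho> x \<in> fst A) \<longrightarrow> eval_trm A \<rho> s = eval_trm A \<rho> t)"
proof
  assume "eqth ar (identities_of ar A) s t"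
  then show "\<forall>\<rho>. (\<forall>x. \<rho> x \<in> fst A) \<longrightarrow> eval_trm A \<rho> s = eval_trm A \<rho> t"
    using eqth_sound in_variety_identities_of[OF assms(1)] by blast
next
  assume "\<forall>\<rho>. (\<forall>x. \<rho> x \<in> fst A) \<longrightarrow> eval_trm A \<rho> s = eval_trm A \<rho> t"
  with assms have "(s, t) \<in> identities_of ar A" by (simp add: identities_of_def)
  from eqth.eq_ax[OF this, where \<sigma> = Var] show "eqth ar (identities_of ar A) s t" by simp
qed

lemma eqth_identities_of_iff_restricted:
  assumes alg: "is_alg ar A" and c: "c \<in> fst A" and s: "s \<in> trms_in ar k" and t: "t \<in> trms_in ar k"
  shows "eqth ar (identities_of ar A) s t \<longleftrightarrow>
    (\<forall>f \<in> PiE {..<k} (\<lambda>_. fst A).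
       eval_trm A (\<lambda>x. if x < k then f x else c) s = eval_trm A (\<lambda>x. if x < k then f x else c) t)"
    (is "_ \<longleftrightarrow> (\<forall>f \<in> ?F. eval_trm A (?ext f) s = eval_trm A (?ext f) t)")
proof -
  have eval_ext: "eval_trm A \<rho> u = eval_trm A (?ext (restrict \<rho> {..<k})) u"
    if "u \<in> trms_in ar k" for \<rho> u
    using that by (intro eval_trm_cong_vars) (auto simp: trms_in_def)
  have "eqth ar (identities_of ar A) s t \<longleftrightarrow>
      (\<forall>\<rho>. (\<forall>x. \<rho> x \<in> fst A) \<longrightarrow> eval_trm A \<rho> s = eval_trm A \<rho> t)"
    using s t by (intro eqth_identities_of_iff[OF alg]) (auto simp: trms_in_def)
  also have "\<dots> \<longleftrightarrow> (\<forall>f \<in> ?F. eval_trm A (?ext f) s = eval_trm A (?ext f) t)"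
  proof
    assume all: "\<forall>\<rho>. (\<forall>x. \<rho> x \<in> fst A) \<longrightarrow> eval_trm A \<rho> s = eval_trm A \<rho> t"
    show "\<forall>f \<in> ?F. eval_trm A (?ext f) s = eval_trm A (?ext f) t"
    proof
      fix f assume "f \<in> ?F"
      then have "\<forall>x. ?ext f x \<in> fst A" using c by auto
      then show "eval_trm A (?ext f) s = eval_trm A (?ext f) t" by (rule all[THEN spec, THEN mp])
    qed
  next
    assume eq: "\<forall>f \<in> ?F. eval_trm A (?ext f) s = eval_trm A (?ext f) t"
    show "\<forall>\<rho>. (\<forall>x. \<rho> x \<in> fst A) \<longrightarrow> eval_trm A \<rho> s = eval_trm A \<rho> t"
    proof (intro allI impI)
      fix \<rho> :: "nat \<Rightarrow> _" assume "\<forall>x. \<rho> x \<in> fst A"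
      then have "restrict \<rho> {..<k} \<in> ?F" by simp
      with eq have "eval_trm A (?ext (restrict \<rho> {..<k})) s = eval_trm A (?ext (restrict \<rho> {..<k})) t"
        by blast
      with eval_ext[OF s] eval_ext[OF t] show "eval_trm A \<rho> s = eval_trm A \<rho> t" by simp
    qed
  qed
  finally show ?thesis .
qed

text \<open>Modulo the identities of a finite algebra A, a term in the first k variables is determined
  by the function it induces on \<open>A\<^sup>k\<close>, and there are finitely many of those.\<close>

lemma locally_finite_identities_of:
  assumes alg: "is_alg ar A" and fin: "finite (fst A)" and c: "c \<in> fst A"
  shows "locally_finite ar (identities_of ar A)"
  unfolding locally_finite_def
proof
  fix k
  let ?T = "trms_in ar k" and ?E = "identities_of ar A" and ?F = "PiE {..<k} (\<lambda>_. fst A)"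
  define key where "key t = restrict (\<lambda>f. eval_trm A (\<lambda>x. if x < k then f x else c) t) ?F" for t
  have "eqth ar ?E s t \<longleftrightarrow> key s = key t" if "s \<in> ?T" "t \<in> ?T" for s t
    unfolding eqth_identities_of_iff_restricted[OF alg c that] key_def restrict_def fun_eq_iff
    by auto
  then have "(\<lambda>t. {s \<in> ?T. eqth ar ?E s t}) ` ?T = (\<lambda>K. {s \<in> ?T. key s = K}) ` key ` ?T"
    unfolding image_image by (intro image_cong) auto
  moreover have "key t \<in> PiE ?F (\<lambda>_. fst A)" if "t \<in> ?T" for t
    unfolding key_def restrict_PiE_iff
    using that alg c by (auto simp: trms_in_def intro!: eval_trm_closed)
  then have "key ` ?T \<subseteq> PiE ?F (\<lambda>_. fst A)" by blast
  then have "finite (key ` ?T)"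
    by (rule finite_subset) (intro finite_PiE fin finite_lessThan)
  ultimately show "finite ((\<lambda>t. {s \<in> ?T. eqth ar ?E s t}) ` ?T)" by simp
qed

definition ker_on :: "'a set \<Rightarrow> ('a \<Rightarrow> 'k) \<Rightarrow> ('a \<times> 'a) set" where
  "ker_on S key = {(x, y). x \<in> S \<and> y \<in> S \<and> key x = key y}"

lemma congruence_ker_on:
  assumes alg: "is_alg ar A"
    and resp: "\<And>f xs ys. length xs = ar f \<Longrightarrow> set xs \<subseteq> fst A \<Longrightarrow> set ys \<subseteq> fst A \<Longrightarrow>
                 map key xs = map key ys \<Longrightarrow> key (snd A f xs) = key (snd A f ys)"
  shows "congruence ar A (ker_on (fst A) key)"
  unfolding congruence_def
proof (intro conjI allI impI)
  show "equiv (fst A) (ker_on (fst A) key)"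
    by (auto simp: equiv_def refl_on_def sym_def trans_def ker_on_def)
  fix f xs ys assume a: "length xs = ar f \<and> list_all2 (\<lambda>a b. (a, b) \<in> ker_on (fst A) key) xs ys"
  then have rel: "list_all2 (\<lambda>a b. a \<in> fst A \<and> b \<in> fst A \<and> key a = key b) xs ys"
    by (simp add: ker_on_def)
  then have xs: "set xs \<subseteq> fst A" and ys: "set ys \<subseteq> fst A"
    by (auto simp: list_all2_conv_all_nth in_set_conv_nth)
  have "map key xs = map key ys"
    using rel by (simp add: list.rel_eq[symmetric] list_all2_map1 list_all2_map2 list_all2_mono)
  then have "key (snd A f xs) = key (snd A f ys)"
    using resp a xs ys by blast
  moreover have "length ys = ar f" using a list_all2_lengthD by fastforce
  ultimately show "(snd A f xs, snd A f ys) \<in> ker_on (fst A) key"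
    using a alg xs ys unfolding ker_on_def is_alg_def by blast
qed

lemma congruence_refl: "congruence ar A \<theta> \<Longrightarrow> x \<in> fst A \<Longrightarrow> (x, x) \<in> \<theta>"
  by (auto simp: congruence_def equiv_def refl_on_def)

lemma congruence_sym: "congruence ar A \<theta> \<Longrightarrow> (x, y) \<in> \<theta> \<Longrightarrow> (y, x) \<in> \<theta>"
  by (auto simp: congruence_def equiv_def sym_def)

lemma congruence_trans: "congruence ar A \<theta> \<Longrightarrow> trans \<theta>"
  by (auto simp: congruence_def equiv_def)

lemma congruence_carrier: "congruence ar A \<theta> \<Longrightarrow> (x, y) \<in> \<theta> \<Longrightarrow> x \<in> fst A \<and> y \<in> fst A"
  by (auto simp: congruence_def equiv_def refl_on_def)

lemma eval_trm_congruent_if_eq: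
  assumes \<theta>: "congruence ar A \<theta>" and s: "wf_trm ar s" and t: "wf_trm ar t"
    and \<rho>: "\<And>i. (\<rho> i, \<rho>' i) \<in> \<theta>" and eq: "eval_trm A \<rho>' s = eval_trm A \<rho>' t"
  shows "(eval_trm A \<rho> s, eval_trm A \<rho> t) \<in> \<theta>"
proof -
  have "(eval_trm A \<rho> s, eval_trm A \<rho>' t) \<in> \<theta>"
    using eval_trm_congruence[OF \<theta> s, of \<rho> \<rho>'] \<rho> eq by simp
  moreover have "(eval_trm A \<rho> t, eval_trm A \<rho>' t) \<in> \<theta>"
    using \<theta> t \<rho> by (rule eval_trm_congruence)
  then have "(eval_trm A \<rho>' t, eval_trm A \<rho> t) \<in> \<theta>" by (rule congruence_sym[OF \<theta>])
  ultimately show ?thesis by (rule transD[OF congruence_trans[OF \<theta>]])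
qed

section \<open>Directed Jonsson terms and Day terms\<close>

lemma trans_alt_comp_absorb:
  assumes "trans X" shows "X O alt_comp X Y (Suc k) \<subseteq> alt_comp X Y (Suc k)"
  using assms by (cases k) (auto dest: transD)

locale directed_jonsson_ops =
  fixes ar :: "'f \<Rightarrow> nat" and A :: "('a, 'f) alg" and n :: nat
    and T :: "nat \<Rightarrow> 'a \<Rightarrow> 'a \<Rightarrow> 'a \<Rightarrow> 'a"
  assumes T_0: "x \<in> fst A \<Longrightarrow> y \<in> fst A \<Longrightarrow> z \<in> fst A \<Longrightarrow> T 0 x y z = x"
    and T_n: "x \<in> fst A \<Longrightarrow> y \<in> fst A \<Longrightarrow> z \<in> fst A \<Longrightarrow> T n x y z = z"
    and T_id: "h \<le> n \<Longrightarrow> x \<in> fst A \<Longrightarrow> y \<in> fst A \<Longrightarrow> T h x y x = x"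
    and T_step: "h < n \<Longrightarrow> x \<in> fst A \<Longrightarrow> z \<in> fst A \<Longrightarrow> T h x z z = T (Suc h) x x z"
    and T_congruence: "h \<le> n \<Longrightarrow> congruence ar A \<theta> \<Longrightarrow>
       (x, x') \<in> \<theta> \<Longrightarrow> (y, y') \<in> \<theta> \<Longrightarrow> (z, z') \<in> \<theta> \<Longrightarrow> (T h x y z, T h x' y' z') \<in> \<theta>"
begin

lemma T_in_class:
  assumes "congruence ar A \<alpha>" "(a, d) \<in> \<alpha>" "h \<le> n" "u \<in> fst A" "v \<in> fst A"
  shows "(T h a u d, T h a v d) \<in> \<alpha>"
proof -
  have a: "a \<in> fst A" using congruence_carrier[OF assms(1,2)] by simp
  have "(T h a w d, a) \<in> \<alpha>" if "w \<in> fst A" for w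
  proof -
    have "(T h a w d, T h a w a) \<in> \<alpha>"
      using T_congruence[OF assms(3,1) congruence_refl[OF assms(1) a] congruence_refl[OF assms(1) that]
          congruence_sym[OF assms(1,2)]] .
    then show ?thesis using T_id[OF assms(3) a that] by simp
  qed
  from this[OF assms(4)] congruence_sym[OF assms(1) this[OF assms(5)]] show ?thesis
    by (rule transD[OF congruence_trans[OF assms(1)]])
qed

lemma T_link:
  assumes \<alpha>: "congruence ar A \<alpha>" and \<beta>: "congruence ar A \<beta>" and \<gamma>: "congruence ar A \<gamma>"
    and ad: "(a, d) \<in> \<alpha>" and ab: "(a, b) \<in> \<beta>" and bc: "(b, c) \<in> \<gamma>" and cd: "(c, d) \<in> \<beta>"
    and "h < n"
  shows "(T h a a d, T (Suc h) a a d) \<in> (\<alpha> \<inter> \<beta>) O (\<alpha> \<inter> \<gamma>) O (\<alpha> \<inter> \<beta>)"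
proof -
  have h: "h \<le> n" using \<open>h < n\<close> by simp
  have carrier: "a \<in> fst A" "b \<in> fst A" "c \<in> fst A" "d \<in> fst A"
    using congruence_carrier[OF \<alpha> ad] congruence_carrier[OF \<beta> ab] congruence_carrier[OF \<gamma> bc]
    by simp_all
  note refl = congruence_refl[OF _ carrier(1)] congruence_refl[OF _ carrier(4)]
  have "(T h a a d, T h a b d) \<in> \<alpha> \<inter> \<beta>"
    using T_congruence[OF h \<beta> refl(1)[OF \<beta>] ab refl(2)[OF \<beta>]] T_in_class[OF \<alpha> ad h carrier(1,2)]
    by simp
  moreover have "(T h a b d, T h a c d) \<in> \<alpha> \<inter> \<gamma>"
    using T_congruence[OF h \<gamma> refl(1)[OF \<gamma>] bc refl(2)[OF \<gamma>]] T_in_class[OF \<alpha> ad h carrier(2,3)]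
    by simp
  moreover have "(T h a c d, T h a d d) \<in> \<alpha> \<inter> \<beta>"
    using T_congruence[OF h \<beta> refl(1)[OF \<beta>] cd refl(2)[OF \<beta>]] T_in_class[OF \<alpha> ad h carrier(3,4)]
    by simp
  moreover have "T h a d d = T (Suc h) a a d" using T_step[OF \<open>h < n\<close> carrier(1,4)] .
  ultimately show ?thesis by auto
qed

lemma congruence_identity:
  assumes \<alpha>: "congruence ar A \<alpha>" and \<beta>: "congruence ar A \<beta>" and \<gamma>: "congruence ar A \<gamma>"
  shows "\<alpha> \<inter> (\<beta> O \<gamma> O \<beta>) \<subseteq> alt_comp (\<alpha> \<inter> \<beta>) (\<alpha> \<inter> \<gamma>) (2 * n - 1)"
proof (clarify)
  fix a d b c assume ad: "(a, d) \<in> \<alpha>" and ab: "(a, b) \<in> \<beta>" and bc: "(b, c) \<in> \<gamma>" and cd: "(c, d) \<in> \<beta>"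
  let ?X = "\<alpha> \<inter> \<beta>" and ?Y = "\<alpha> \<inter> \<gamma>"
  have a: "a \<in> fst A" and d: "d \<in> fst A" using congruence_carrier[OF \<alpha> ad] by simp_all
  have absorb: "?X O alt_comp ?X ?Y (Suc k) \<subseteq> alt_comp ?X ?Y (Suc k)" for k
    by (intro trans_alt_comp_absorb trans_Int congruence_trans[OF \<alpha>] congruence_trans[OF \<beta>])
  have chain: "(T h a a d, d) \<in> alt_comp ?X ?Y (2 * (n - h) + 1)" if "h \<le> n" for h
    using that
  proof (induction h rule: inc_induct)
    case base
    then show ?case using T_n a d congruence_refl[OF \<alpha> d] congruence_refl[OF \<beta> d] by simp
  next
    case (step h)
    obtain u v where "(T h a a d, u) \<in> ?X" "(u, v) \<in> ?Y" and "(v, T (Suc h) a a d) \<in> ?X"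
      using T_link[OF \<alpha> \<beta> \<gamma> ad ab bc cd step.hyps(2)] by blast
    moreover from this(3) have "(v, d) \<in> alt_comp ?X ?Y (2 * (n - Suc h) + 1)"
      using step.IH absorb[of "2 * (n - Suc h)"] by auto
    ultimately have "(T h a a d, d) \<in> ?X O ?Y O alt_comp ?X ?Y (2 * (n - Suc h) + 1)"
      by blast
    moreover have "2 * (n - h) + 1 = Suc (Suc (2 * (n - Suc h) + 1))" using step.hyps(2) by simp
    ultimately show ?case by simp
  qed
  show "(a, d) \<in> alt_comp ?X ?Y (2 * n - 1)"
  proof (cases n)
    case 0
    then show ?thesis using T_0[of a a d] T_n[of a a d] a d by simp
  next
    case (Suc m)
    then have "T 1 a a d = a" using T_0[of a d d] T_step[of 0 a d] a d by simp
    with chain[of 1] Suc show ?thesis by simp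
  qed
qed

end

lemma directed_jonsson_ops_exist:
  assumes dj: "directed_jonsson ar E n" and A: "in_variety ar E A"
  shows "\<exists>T. directed_jonsson_ops ar A n T"
proof -
  obtain t where tin: "\<forall>h\<le>n. t h \<in> trms_in ar 3"
    and t0: "eqth ar E (t 0) vx" and tn: "eqth ar E (t n) vz"
    and tid: "\<forall>h\<le>n. eqth ar E (app3 (t h) vx vy vx) vx"
    and tstep: "\<forall>h<n. eqth ar E (app3 (t h) vx vz vz) (app3 (t (Suc h)) vx vx vz)"
    using dj unfolding directed_jonsson_def by blast
  define T where "T h x y z = eval_trm A (\<lambda>i. if i = 0 then x else if i = 1 then y else z) (t h)"
    for h x y z
  have "directed_jonsson_ops ar A n T"
  proof
    fix x y z assume "x \<in> fst A" "y \<in> fst A" "z \<in> fst A"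
    with eqth_sound[OF t0 A] eqth_sound[OF tn A]
    show "T 0 x y z = x" and "T n x y z = z" by (simp_all add: T_def)
  next
    fix h x y assume "h \<le> n" "x \<in> fst A" "y \<in> fst A"
    with eqth_sound[OF tid[rule_format] A, of h "\<lambda>i. if i = 0 then x else y"]
    show "T h x y x = x"
      by (simp add: T_def eval_app3 cong: if_cong)
  next
    fix h x z assume "h < n" "x \<in> fst A" "z \<in> fst A"
    with eqth_sound[OF tstep[rule_format] A, of h "\<lambda>i. if i = 0 then x else z"]
    show "T h x z z = T (Suc h) x x z"
      by (simp add: T_def eval_app3 cong: if_cong)
  next
    fix h \<theta> x y z x' y' z'
    assume "h \<le> n" "congruence ar A \<theta>" "(x, x') \<in> \<theta>" "(y, y') \<in> \<theta>" "(z, z') \<in> \<theta>"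
    with tin show "(T h x y z, T h x' y' z') \<in> \<theta>"
      unfolding T_def by (intro eval_trm_congruence) (auto simp: trms_in_def)
  qed
  then show ?thesis by blast
qed

lemma directed_jonsson_congruence_identity:
  assumes "directed_jonsson ar E n" "in_variety ar E A"
    and "congruence ar A \<alpha>" "congruence ar A \<beta>" "congruence ar A \<gamma>"
  shows "\<alpha> \<inter> (\<beta> O \<gamma> O \<beta>) \<subseteq> alt_comp (\<alpha> \<inter> \<beta>) (\<alpha> \<inter> \<gamma>) (2 * n - 1)"
proof -
  obtain T where "directed_jonsson_ops ar A n T"
    using directed_jonsson_ops_exist[OF assms(1,2)] by blast
  then show ?thesis by (rule directed_jonsson_ops.congruence_identity) (fact assms)+
qed

text \<open>The Day terms are \<open>u\<^sub>2\<^sub>h = t\<^sub>h(x, z, w)\<close> and \<open>u\<^sub>2\<^sub>h\<^sub>-\<^sub>1 = t\<^sub>h(x, y, w)\<close>.\<close>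

lemma directed_jonsson_imp_day_modular:
  fixes ar :: "'f \<Rightarrow> nat"
  assumes dj: "directed_jonsson ar E n"
  shows "day_modular ar E (2 * n - 1)"
proof -
  obtain t where t_in: "\<forall>h\<le>n. t h \<in> trms_in ar 3"
    and t_0: "eqth ar E (t 0) vx" and t_n: "eqth ar E (t n) vz"
    and t_id: "\<forall>h\<le>n. eqth ar E (app3 (t h) vx vy vx) vx"
    and t_step: "\<forall>h<n. eqth ar E (app3 (t h) vx vz vz) (app3 (t (Suc h)) vx vx vz)"
    using dj unfolding directed_jonsson_def by blast
  define m where "m = 2 * n - 1"
  define u where "u k = app3 (t (Suc k div 2)) vx (if even k then vz else vy) vw" for k
  have index_le: "Suc k div 2 \<le> n" if "k \<le> m" for k
    using that unfolding m_def by linarith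
  have u_in: "u k \<in> trms_in ar 4" if "k \<le> m" for k
    unfolding u_def using t_in index_le[OF that] by (intro app3_in_trms_in) (auto simp: trms_in_def)
  have u_id: "eqth ar E (app4 (u k) vx vy vy vx) vx" if "k \<le> m" for k
  proof -
    have "app4 (u k) vx vy vy vx = app3 (t (Suc k div 2)) vx vy vx" by (simp add: u_def app4_app3)
    with t_id index_le[OF that] show ?thesis by simp
  qed
  have u_0: "eqth ar E (u 0) vx"
    using eqth_subst_trm[OF t_0, of "\<lambda>i. if i = 0 then vx else if i = 1 then vz else vw"]
    by (simp add: u_def app3_def)
  have u_m: "eqth ar E (u m) vw"
  proof (cases "n = 0")
    case True
    then show ?thesis
      using eqth_subst_trm[OF t_n, of "\<lambda>i. if i = 0 then vx else if i = 1 then vz else vw"]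
      by (simp add: u_def m_def app3_def)
  next
    case False
    then have "odd m" "Suc m div 2 = n" unfolding m_def by auto
    then show ?thesis
      using eqth_subst_trm[OF t_n, of "\<lambda>i. if i = 0 then vx else if i = 1 then vy else vw"]
      by (simp add: u_def app3_def One_nat_def cong: if_cong)
  qed
  have u_even: "eqth ar E (app4 (u k) vx vx vw vw) (app4 (u (Suc k)) vx vx vw vw)"
    if "k < m" "even k" for k
  proof -
    obtain h where h: "k = 2 * h" using \<open>even k\<close> by (auto elim: evenE)
    with that have "eqth ar E (app3 (t h) vx vw vw) (app3 (t (Suc h)) vx vx vw)"
      using eqth_subst_trm[OF t_step[rule_format], of h "\<lambda>i. if i = 2 then vw else Var i"]
      by (simp add: m_def subst_trm_app3)
    then show ?thesis using h by (simp add: u_def app4_app3)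
  qed
  have u_odd: "eqth ar E (app4 (u k) vx vy vy vw) (app4 (u (Suc k)) vx vy vy vw)"
    if "k < m" "odd k" for k
  proof -
    have "wf_trm ar (app4 (u k) vx vy vy vw)"
      using u_in[of k] that unfolding app4_def trms_in_def by (intro wf_subst_trm) auto
    with \<open>odd k\<close> show ?thesis by (simp add: u_def app4_app3 eqth.eq_refl)
  qed
  show ?thesis unfolding day_modular_def m_def[symmetric]
    using u_in u_id u_0 u_m u_even u_odd by blast
qed

text \<open>Prepending the trivial term \<open>x\<close> shifts the parity of the Day identities.\<close>

lemma day_modular_imp_reversed_modular:
  fixes ar :: "'f \<Rightarrow> nat"
  assumes "day_modular ar E m" shows "reversed_modular ar E (Suc m)"
proof -
  obtain u where u_in: "\<forall>k\<le>m. u k \<in> trms_in ar 4"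
    and u_id: "\<forall>k\<le>m. eqth ar E (app4 (u k) vx vy vy vx) vx"
    and u_0: "eqth ar E (u 0) vx" and u_m: "eqth ar E (u m) vw"
    and u_even: "\<forall>k<m. even k \<longrightarrow> eqth ar E (app4 (u k) vx vx vw vw) (app4 (u (Suc k)) vx vx vw vw)"
    and u_odd: "\<forall>k<m. odd k \<longrightarrow> eqth ar E (app4 (u k) vx vy vy vw) (app4 (u (Suc k)) vx vy vy vw)"
    using assms unfolding day_modular_def by blast
  define v where "v k = (case k of 0 \<Rightarrow> vx | Suc j \<Rightarrow> u j)" for k
  have first: "eqth ar E (app4 (v 0) vx vy vy vw) (app4 (v (Suc 0)) vx vy vy vw)"
    using eqth.eq_sym[OF eqth_subst_trm[OF u_0,
        of "\<lambda>i. if i = 0 then vx else if i = 1 then vy else if i = 2 then vy else vw"]]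
    by (simp add: v_def app4_def One_nat_def cong: if_cong)
  show ?thesis unfolding reversed_modular_def
  proof (intro exI[of _ v] conjI allI impI)
    fix k assume "k \<le> Suc m"
    then show "v k \<in> trms_in ar 4" and "eqth ar E (app4 (v k) vx vy vy vx) vx"
      using u_in u_id by (auto simp: v_def trms_in_def intro: eqth.eq_refl split: nat.split)
  next
    show "eqth ar E (v 0) vx" by (simp add: v_def eqth.eq_refl)
    show "eqth ar E (v (Suc m)) vw" using u_m by (simp add: v_def)
  next
    fix k assume "k < Suc m" "odd k"
    then show "eqth ar E (app4 (v k) vx vx vw vw) (app4 (v (Suc k)) vx vx vw vw)"
      using u_even by (cases k) (auto simp: v_def)
  next
    fix k assume "k < Suc m" "even k"
    then show "eqth ar E (app4 (v k) vx vy vy vw) (app4 (v (Suc k)) vx vy vy vw)"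
      using first u_odd by (cases k) (auto simp: v_def)
  qed
qed

lemma reversed_modular_chain:
  assumes rm: "reversed_modular ar E m" and A: "in_variety ar E A"
    and \<alpha>: "congruence ar A \<alpha>" and \<beta>: "congruence ar A \<beta>" and \<gamma>: "congruence ar A \<gamma>"
    and ad: "(a, d) \<in> \<alpha>" and ab: "(a, b) \<in> \<beta>" and bc: "(b, c) \<in> \<alpha> \<inter> \<gamma>" and cd: "(c, d) \<in> \<beta>"
  obtains e where "e 0 = a" "e m = d" "\<And>k. k \<le> m \<Longrightarrow> (e k, a) \<in> \<alpha>"
    "\<And>k. k < m \<Longrightarrow> even k \<Longrightarrow> (e k, e (Suc k)) \<in> \<gamma>"
    "\<And>k. k < m \<Longrightarrow> odd k \<Longrightarrow> (e k, e (Suc k)) \<in> \<beta>"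
proof -
  obtain u where u_in: "\<forall>k\<le>m. u k \<in> trms_in ar 4"
    and u_id: "\<forall>k\<le>m. eqth ar E (app4 (u k) vx vy vy vx) vx"
    and u_0: "eqth ar E (u 0) vx" and u_m: "eqth ar E (u m) vw"
    and u_odd: "\<forall>k<m. odd k \<longrightarrow> eqth ar E (app4 (u k) vx vx vw vw) (app4 (u (Suc k)) vx vx vw vw)"
    and u_even: "\<forall>k<m. even k \<longrightarrow> eqth ar E (app4 (u k) vx vy vy vw) (app4 (u (Suc k)) vx vy vy vw)"
    using rm unfolding reversed_modular_def by blast
  define \<rho> where "\<rho> = (\<lambda>i::nat. if i = 0 then a else if i = 1 then b else if i = 2 then c else d)"
  define e where "e k = eval_trm A \<rho> (u k)" for k
  have carrier: "a \<in> fst A" "b \<in> fst A" "c \<in> fst A" "d \<in> fst A"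
    using congruence_carrier[OF \<alpha> ad] congruence_carrier[OF \<gamma>] bc congruence_carrier[OF \<beta> cd] by auto
  have sound: "eval_trm A \<rho> s = eval_trm A \<rho> t" if "eqth ar E s t" for s t
    using that A by (rule eqth_sound) (simp add: \<rho>_def carrier)
  have wf_u: "wf_trm ar (u k)" if "k \<le> m" for k
    using u_in that by (simp add: trms_in_def)
  have refl: "(a, a) \<in> \<theta>" "(b, b) \<in> \<theta>" "(d, d) \<in> \<theta>" if "congruence ar A \<theta>" for \<theta>
    using congruence_refl[OF that] carrier by simp_all
  have sym: "(c, b) \<in> \<alpha>" "(d, a) \<in> \<alpha>" "(c, b) \<in> \<gamma>" "(b, a) \<in> \<beta>"
    using congruence_sym[OF \<alpha>, of b c] congruence_sym[OF \<alpha> ad] congruence_sym[OF \<gamma>, of b c]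
      congruence_sym[OF \<beta> ab] bc by auto
  show thesis
  proof
    show "e 0 = a" and "e m = d"
      using sound[OF u_0] sound[OF u_m] by (simp_all add: e_def \<rho>_def)
  next
    fix k assume k: "k \<le> m"
    let ?\<rho>' = "\<lambda>i::nat. if i = 0 then a else if i = 1 then b else if i = 2 then b else a"
    have eq: "eval_trm A ?\<rho>' (u k) = eval_trm A ?\<rho>' vx"
      using sound[OF u_id[rule_format, OF k]] by (simp add: eval_app4 \<rho>_def cong: if_cong)
    have "(e k, eval_trm A \<rho> vx) \<in> \<alpha>"
      unfolding e_def using refl[OF \<alpha>] sym
      by (intro eval_trm_congruent_if_eq[OF \<alpha> wf_u[OF k] _ _ eq]) (auto simp: \<rho>_def)
    then show "(e k, a) \<in> \<alpha>" by (simp add: \<rho>_def)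
  next
    fix k assume k: "k < m" "even k"
    let ?\<rho>' = "\<lambda>i::nat. if i = 0 then a else if i = 1 then b else if i = 2 then b else d"
    have eq: "eval_trm A ?\<rho>' (u k) = eval_trm A ?\<rho>' (u (Suc k))"
      using sound[OF u_even[rule_format, OF k]] by (simp add: eval_app4 \<rho>_def cong: if_cong)
    show "(e k, e (Suc k)) \<in> \<gamma>"
      unfolding e_def using k refl[OF \<gamma>] sym
      by (intro eval_trm_congruent_if_eq[OF \<gamma> wf_u wf_u _ eq]) (auto simp: \<rho>_def)
  next
    fix k assume k: "k < m" "odd k"
    let ?\<rho>' = "\<lambda>i::nat. if i = 0 then a else if i = 1 then a else if i = 2 then d else d"
    have eq: "eval_trm A ?\<rho>' (u k) = eval_trm A ?\<rho>' (u (Suc k))"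
      using sound[OF u_odd[rule_format, OF k]] by (simp add: eval_app4 \<rho>_def cong: if_cong)
    show "(e k, e (Suc k)) \<in> \<beta>"
      unfolding e_def using k refl[OF \<beta>] sym cd
      by (intro eval_trm_congruent_if_eq[OF \<beta> wf_u wf_u _ eq]) (auto simp: \<rho>_def)
  qed
qed

section \<open>A locally finite n-directed-distributive variety\<close>

definition median :: "int \<Rightarrow> int \<Rightarrow> int \<Rightarrow> int" where
  "median a b c = max (min a b) (min (max a b) c)"

lemma median_mono: "a \<le> a' \<Longrightarrow> b \<le> b' \<Longrightarrow> c \<le> c' \<Longrightarrow> median a b c \<le> median a' b' c'"
  by (auto simp: median_def max_def min_def)

lemma median_plus_one: "median (a + 1) (b + 1) (c + 1) = median a b c + 1"
  by (auto simp: median_def max_def min_def)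

lemma median_idem [simp]: "median x x y = x" "median x y x = x" "median y x x = x"
  by (auto simp: median_def max_def min_def)

lemma median_between: "min a b \<le> median a b c \<and> median a b c \<le> max a b"
  by (auto simp: median_def max_def min_def)

lemma median_eq_middle:
  "a \<le> b \<Longrightarrow> b \<le> c \<Longrightarrow> median a b c = b" "c \<le> b \<Longrightarrow> b \<le> a \<Longrightarrow> median a b c = b"
  "a \<le> b \<Longrightarrow> b \<le> c \<Longrightarrow> median b c a = b" "c \<le> b \<Longrightarrow> b \<le> a \<Longrightarrow> median b c a = b"
  by (auto simp: median_def max_def min_def)

definition band :: "int \<Rightarrow> int \<Rightarrow> bool" where
  "band p q \<longleftrightarrow> p \<le> q \<and> q \<le> p + 1"

lemma band_median: "band a a' \<Longrightarrow> band b b' \<Longrightarrow> band c c' \<Longrightarrow> band (median a b c) (median a' b' c')"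
  unfolding band_def
  using median_mono[of a a' b b' c c'] median_mono[of a' "a + 1" b' "b + 1" c' "c + 1"]
    median_plus_one[of a b c] by simp

text \<open>For \<open>h = 0, \<dots>, n\<close> the value \<open>walk N n h x z\<close> moves monotonically from \<open>x\<close> to \<open>z\<close>: on the
  way up it clamps \<open>h - 1\<close>, on the way down \<open>N + 1 - h\<close>, into the interval between \<open>x\<close> and \<open>z\<close>.
  Here \<open>N\<close> is the largest value of the coordinate the walk is used for.\<close>

definition walk :: "int \<Rightarrow> nat \<Rightarrow> nat \<Rightarrow> int \<Rightarrow> int \<Rightarrow> int" where
  "walk N n h x z = (if h = n then z else median x z (if x < z then int h - 1 else N + 1 - int h))"

definition walk_op :: "int \<Rightarrow> nat \<Rightarrow> nat \<Rightarrow> int \<Rightarrow> int \<Rightarrow> int \<Rightarrow> int" where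
  "walk_op N n h x y z = median (walk N n h x z) (walk N n (Suc h) x z) y"

lemma walk_between: "min x z \<le> walk N n h x z \<and> walk N n h x z \<le> max x z"
  by (auto simp: walk_def median_def max_def min_def)

lemma walk_mono:
  assumes "Suc h \<le> n"
  shows "x < z \<Longrightarrow> walk N n h x z \<le> walk N n (Suc h) x z"
    and "z < x \<Longrightarrow> walk N n (Suc h) x z \<le> walk N n h x z"
  using assms walk_between[of x z N n h] by (auto simp: walk_def median_def max_def min_def)

lemma band_walk:
  "band xp xq \<Longrightarrow> band zp zq \<Longrightarrow> h \<le> n \<Longrightarrow> band (walk N n h xp zp) (walk (N + 1) n h xq zq)"
  by (auto simp: band_def walk_def median_def max_def min_def)

lemma walk_op_range:
  "0 \<le> x \<Longrightarrow> x \<le> M \<Longrightarrow> 0 \<le> y \<Longrightarrow> y \<le> M \<Longrightarrow> 0 \<le> z \<Longrightarrow> z \<le> M \<Longrightarrow>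
   0 \<le> walk_op N n h x y z \<and> walk_op N n h x y z \<le> M"
  using walk_between[of x z N n h] walk_between[of x z N n "Suc h"]
    median_between[of "walk N n h x z" "walk N n (Suc h) x z" y]
  unfolding walk_op_def by (auto simp: max_def min_def split: if_splits)

lemma walk_op_id: "walk_op N n h x y x = x"
  by (simp add: walk_op_def walk_def)

lemma walk_op_first: "n \<noteq> 1 \<Longrightarrow> 0 \<le> x \<Longrightarrow> x \<le> N \<Longrightarrow> walk_op N n 1 x x z = x"
  by (simp add: walk_op_def walk_def median_def max_def min_def)

lemma walk_op_last: "2 \<le> n \<Longrightarrow> walk_op N n (n - 1) x z z = z"
  by (simp add: walk_op_def walk_def)

lemma walk_op_step:
  assumes "Suc (Suc h) \<le> n"
  shows "walk_op N n h x z z = walk_op N n (Suc h) x x z"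
proof -
  consider "x < z" | "z < x" | "x = z" by linarith
  then show ?thesis
  proof cases
    case 1
    with assms walk_mono(1)[of h n x z N] walk_mono(1)[of "Suc h" n x z N]
      walk_between[of x z N n "Suc h"]
    show ?thesis unfolding walk_op_def by (simp add: median_eq_middle(1,3))
  next
    case 2
    with assms walk_mono(2)[of h n z x N] walk_mono(2)[of "Suc h" n z x N]
      walk_between[of x z N n "Suc h"]
    show ?thesis unfolding walk_op_def by (simp add: median_eq_middle(2,4))
  qed (simp add: walk_op_def walk_def)
qed

lemma band_walk_op:
  "band xp xq \<Longrightarrow> band yp yq \<Longrightarrow> band zp zq \<Longrightarrow> Suc h \<le> n \<Longrightarrow>
   band (walk_op N n h xp yp zp) (walk_op (N + 1) n h xq yq zq)"
  unfolding walk_op_def by (intro band_median band_walk) auto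

lemma band_median_between: "band a v \<Longrightarrow> band b v \<Longrightarrow> band (median a b c) v"
  using median_between[of a b c] by (auto simp: band_def max_def min_def split: if_splits)

lemma walk_first: "n \<noteq> 1 \<Longrightarrow> 0 \<le> x \<Longrightarrow> x \<le> N \<Longrightarrow> walk N n 1 x z = x"
  by (simp add: walk_def median_def max_def min_def)

lemma walk_second:
  "2 \<le> n \<Longrightarrow> 0 \<le> x \<Longrightarrow> x \<le> int n - 1 \<Longrightarrow> 0 \<le> z \<Longrightarrow> z \<le> int n - 1 \<Longrightarrow>
   walk (int n - 1) n 2 x z =
     (if x < z \<and> x = 0 then 1 else if z < x \<and> x = int n - 1 then int n - 2 else x)"
  by (auto simp: walk_def median_def max_def min_def)

lemma walk_penultimate:
  "2 \<le> n \<Longrightarrow> 0 \<le> x \<Longrightarrow> x \<le> int n - 1 \<Longrightarrow> 0 \<le> z \<Longrightarrow> z \<le> int n - 1 \<Longrightarrow>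
   walk (int n - 1) n (n - 1) x z =
     (if x < z \<and> z = int n - 1 then int n - 2 else if z < x \<and> z = 0 then 1 else z)"
  by (auto simp: walk_def median_def max_def min_def of_nat_diff)

lemma band_walk_op_None_y:
  assumes "band xp xq" "band zp zq" "0 \<le> xp" "xp \<le> int n - 1" "0 \<le> zp" "zp \<le> int n - 1"
    and "1 \<le> h" "h < n"
  shows "band (walk_op (int n - 1) n h xp yp zp) (median xq zq (if xq < zq then int h else int n - int h))"
  unfolding walk_op_def
  by (intro band_median_between) (use assms in \<open>auto simp: band_def walk_def median_def max_def min_def\<close>)

lemma band_walk_op_None_z:
  assumes "band xp xq" "band yp yq" "0 \<le> xp" "xp \<le> int n - 1" "0 \<le> yp" "yp \<le> int n - 1"
    and "0 \<le> zp" "zp \<le> int n - 1" "2 \<le> n"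
  shows "band (walk_op (int n - 1) n 1 xp yp zp) (median xq yq (median 1 xq (int n - 1)))"
  unfolding walk_op_def using assms walk_first[of n xp "int n - 1" zp] walk_second[of n xp zp]
  by (simp add: numeral_2_eq_2) (auto simp: band_def median_def max_def min_def)

lemma band_walk_op_None_x:
  assumes "band yp yq" "band zp zq" "0 \<le> xp" "xp \<le> int n - 1" "0 \<le> yp" "yp \<le> int n - 1"
    and "0 \<le> zp" "zp \<le> int n - 1" "2 \<le> n"
  shows "band (walk_op (int n - 1) n (n - 1) xp yp zp) (median zq yq (median 1 zq (int n - 1)))"
  unfolding walk_op_def using assms walk_penultimate[of n xp zp]
  by (simp add: walk_def) (auto simp: band_def median_def max_def min_def)

type_synonym dd_elt = "int \<times> int option"

definition snd_op :: "nat \<Rightarrow> nat \<Rightarrow> int option \<Rightarrow> int option \<Rightarrow> int option \<Rightarrow> int option" where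
  "snd_op n h xo yo zo = (case (xo, yo, zo) of
       (Some x, Some y, Some z) \<Rightarrow> Some (walk_op (int n) n h x y z)
     | (Some x, None, Some z) \<Rightarrow> Some (median x z (if x < z then int h else int n - int h))
     | (Some x, Some y, None) \<Rightarrow> (if h = 1 then Some (median x y (median 1 x (int n - 1))) else None)
     | (None, Some y, Some z) \<Rightarrow>
         (if h = n - 1 then Some (median z y (median 1 z (int n - 1))) else None)
     | _ \<Rightarrow> None)"

definition dd_op :: "nat \<Rightarrow> nat \<Rightarrow> dd_elt \<Rightarrow> dd_elt \<Rightarrow> dd_elt \<Rightarrow> dd_elt" where
  "dd_op n h x y z = (walk_op (int n - 1) n h (fst x) (fst y) (fst z), snd_op n h (snd x) (snd y) (snd z))"

definition dd_carrier :: "nat \<Rightarrow> dd_elt set" where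
  "dd_carrier n = {(p, qo). 0 \<le> p \<and> p \<le> int n - 1 \<and> (\<forall>q. qo = Some q \<longrightarrow> band p q)}"

definition dd_alg :: "nat \<Rightarrow> (dd_elt, nat) alg" where
  "dd_alg n = (dd_carrier n, \<lambda>h xs. if 1 \<le> h \<and> h < n then dd_op n h (xs ! 0) (xs ! 1) (xs ! 2) else xs ! 0)"

lemma snd_op_eq_None_iff:
  "(xo = None) = (xo' = None) \<Longrightarrow> (yo = None) = (yo' = None) \<Longrightarrow> (zo = None) = (zo' = None) \<Longrightarrow>
   (snd_op n h xo yo zo = None) = (snd_op n h xo' yo' zo' = None)"
  by (cases xo; cases xo'; cases yo; cases yo'; cases zo; cases zo') (auto simp: snd_op_def)

lemma dd_op_closed:
  assumes n: "2 \<le> n" and h: "1 \<le> h" "h < n"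
    and S: "x \<in> dd_carrier n" "y \<in> dd_carrier n" "z \<in> dd_carrier n"
  shows "dd_op n h x y z \<in> dd_carrier n"
proof -
  obtain xp xo yp yo zp zo where e: "x = (xp, xo)" "y = (yp, yo)" "z = (zp, zo)"
    by (cases x, cases y, cases z) auto
  have r: "0 \<le> xp" "xp \<le> int n - 1" "0 \<le> yp" "yp \<le> int n - 1" "0 \<le> zp" "zp \<le> int n - 1"
    using S e by (auto simp: dd_carrier_def)
  have "band (walk_op (int n - 1) n h xp yp zp) q" if "snd_op n h xo yo zo = Some q" for q
  proof (cases xo; cases yo; cases zo)
    fix xq yq zq assume "xo = Some xq" "yo = Some yq" "zo = Some zq"
    with that S e h band_walk_op[of xp xq yp yq zp zq h n "int n - 1"] show ?thesis
      by (auto simp: dd_carrier_def snd_op_def)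
  next
    fix xq zq assume "xo = Some xq" "yo = None" "zo = Some zq"
    with that S e h r band_walk_op_None_y[of xp xq zp zq n h yp] show ?thesis
      by (auto simp: dd_carrier_def snd_op_def)
  next
    fix xq yq assume "xo = Some xq" "yo = Some yq" "zo = None"
    with that S e n r band_walk_op_None_z[of xp xq yp yq n zp] show ?thesis
      by (auto simp: dd_carrier_def snd_op_def split: if_splits)
  next
    fix yq zq assume "xo = None" "yo = Some yq" "zo = Some zq"
    with that S e n r band_walk_op_None_x[of yp yq zp zq xp n] show ?thesis
      by (auto simp: dd_carrier_def snd_op_def split: if_splits)
  qed (use that in \<open>auto simp: snd_op_def\<close>)
  moreover have "0 \<le> walk_op (int n - 1) n h xp yp zp \<and> walk_op (int n - 1) n h xp yp zp \<le> int n - 1"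
    using walk_op_range r by blast
  ultimately show ?thesis using e by (simp add: dd_op_def dd_carrier_def)
qed

lemma dd_op_id: "x \<in> dd_carrier n \<Longrightarrow> dd_op n h x y x = x"
  by (cases x; cases "snd x"; cases "snd y") (auto simp: dd_op_def snd_op_def walk_op_id)

lemma dd_op_first:
  assumes "2 \<le> n" "x \<in> dd_carrier n"
  shows "dd_op n 1 x x z = x"
proof -
  obtain xp xo where x: "x = (xp, xo)" by (cases x)
  with assms have "0 \<le> xp" "xp \<le> int n - 1" "\<forall>q. xo = Some q \<longrightarrow> 0 \<le> q \<and> q \<le> int n"
    by (auto simp: dd_carrier_def band_def)
  with assms x walk_op_first[of n xp "int n - 1" "fst z"] walk_op_first[of n _ "int n" "the (snd z)"]
  show ?thesis
    by (cases xo; cases "snd z") (auto simp: dd_op_def snd_op_def)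
qed

lemma dd_op_last: "2 \<le> n \<Longrightarrow> dd_op n (n - 1) x z z = z"
  using walk_op_last[of n "int n - 1" "fst x" "fst z"] walk_op_last[of n "int n" _ "the (snd z)"]
  by (cases "snd x"; cases "snd z") (auto simp: dd_op_def snd_op_def prod_eq_iff)

lemma dd_op_step:
  assumes "1 \<le> h" "Suc h < n"
  shows "dd_op n h x z z = dd_op n (Suc h) x x z"
  using assms by (cases "snd x"; cases "snd z") (auto simp: dd_op_def snd_op_def walk_op_step)

lemma is_alg_dd_alg: "2 \<le> n \<Longrightarrow> is_alg (\<lambda>_. 3) (dd_alg n)"
  unfolding is_alg_def dd_alg_def
  by (auto simp: numeral_3_eq_3 length_Suc_conv intro!: dd_op_closed)

lemma finite_dd_carrier: "finite (dd_carrier n)"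
proof (rule finite_subset)
  show "dd_carrier n \<subseteq> {0..int n - 1} \<times> insert None (Some ` {0..int n})"
  proof
    fix e assume "e \<in> dd_carrier n"
    then show "e \<in> {0..int n - 1} \<times> insert None (Some ` {0..int n})"
      by (cases e; cases "snd e") (auto simp: dd_carrier_def band_def)
  qed
qed auto

lemma congruence_dd_ker_on:
  assumes n: "2 \<le> n"
    and resp: "\<And>h x y z x' y' z'. 1 \<le> h \<Longrightarrow> h < n \<Longrightarrow>
         key x = key x' \<Longrightarrow> key y = key y' \<Longrightarrow> key z = key z' \<Longrightarrow>
         key (dd_op n h x y z) = key (dd_op n h x' y' z')"
  shows "congruence (\<lambda>_. 3) (dd_alg n) (ker_on (dd_carrier n) key)"
proof -
  have "key (snd (dd_alg n) f xs) = key (snd (dd_alg n) f ys)"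
    if "length xs = 3" "map key xs = map key ys" for f xs ys
  proof -
    have "length ys = 3" using that by (metis length_map)
    with that obtain x y z x' y' z' where "xs = [x, y, z]" "ys = [x', y', z']"
      by (auto simp: numeral_3_eq_3 length_Suc_conv)
    with that show ?thesis by (auto simp: dd_alg_def intro!: resp)
  qed
  then show ?thesis
    using congruence_ker_on[OF is_alg_dd_alg[OF n], of key] by (simp add: dd_alg_def)
qed

lemma congruence_dd_fst: "2 \<le> n \<Longrightarrow> congruence (\<lambda>_. 3) (dd_alg n) (ker_on (dd_carrier n) fst)"
  by (rule congruence_dd_ker_on) (auto simp: dd_op_def)

lemma congruence_dd_snd: "2 \<le> n \<Longrightarrow> congruence (\<lambda>_. 3) (dd_alg n) (ker_on (dd_carrier n) snd)"
  by (rule congruence_dd_ker_on) (auto simp: dd_op_def)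

lemma congruence_dd_snd_None:
  assumes "2 \<le> n"
  shows "congruence (\<lambda>_. 3) (dd_alg n) (ker_on (dd_carrier n) (\<lambda>e. snd e = None))"
proof (rule congruence_dd_ker_on[OF assms])
  fix h and x y z x' y' z' :: dd_elt
  assume "(snd x = None) = (snd x' = None)" "(snd y = None) = (snd y' = None)"
    "(snd z = None) = (snd z' = None)"
  then show "(snd (dd_op n h x y z) = None) = (snd (dd_op n h x' y' z') = None)"
    unfolding dd_op_def snd_conv by (rule snd_op_eq_None_iff)
qed

definition dd_fn :: "nat \<Rightarrow> nat \<Rightarrow> dd_elt \<Rightarrow> dd_elt \<Rightarrow> dd_elt \<Rightarrow> dd_elt" where
  "dd_fn n h x y z = (if h = 0 then x else if h = n then z else dd_op n h x y z)"

definition dd_trm :: "nat \<Rightarrow> nat \<Rightarrow> (nat, nat) trm" where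
  "dd_trm n h = (if h = 0 then vx else if h = n then vz else Fun h [vx, vy, vz])"

lemma eval_dd_trm:
  "h \<le> n \<Longrightarrow> eval_trm (dd_alg n) \<rho> (dd_trm n h) = dd_fn n h (\<rho> 0) (\<rho> 1) (\<rho> 2)"
  by (auto simp: dd_trm_def dd_fn_def dd_alg_def)

lemma dd_fn_id: "h \<le> n \<Longrightarrow> x \<in> dd_carrier n \<Longrightarrow> dd_fn n h x y x = x"
  by (simp add: dd_fn_def dd_op_id)

lemma dd_fn_step:
  assumes "2 \<le> n" "h < n" "x \<in> dd_carrier n"
  shows "dd_fn n h x z z = dd_fn n (Suc h) x x z"
proof -
  consider "h = 0" | "Suc h = n" | "1 \<le> h" "Suc h < n" using assms(2) by linarith
  then show ?thesis
  proof cases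
    case 1
    then show ?thesis using assms dd_op_first[of n x z] by (simp add: dd_fn_def)
  next
    case 2
    then show ?thesis using assms dd_op_last[of n x z] by (auto simp: dd_fn_def)
  next
    case 3
    then show ?thesis using dd_op_step[of h n x z] by (simp add: dd_fn_def)
  qed
qed

lemma directed_jonsson_dd:
  assumes n: "2 \<le> n"
  shows "directed_jonsson (\<lambda>_. 3) (identities_of (\<lambda>_. 3) (dd_alg n)) n"
proof -
  let ?ar = "\<lambda>_::nat. 3::nat" and ?A = "dd_alg n"
  have in_trms: "dd_trm n h \<in> trms_in ?ar 3" for h
    by (auto simp: dd_trm_def trms_in_def)
  have wf_app3: "wf_trm ?ar (app3 (dd_trm n h) p q r)" if "p \<in> {vx, vy, vz}" "q \<in> {vx, vy, vz}" "r \<in> {vx, vy, vz}" for h p q r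
    using app3_in_trms_in[OF in_trms, of p 3 q r] that by (auto simp: trms_in_def)
  have eqth_iff: "eqth ?ar (identities_of ?ar ?A) s t \<longleftrightarrow>
      (\<forall>\<rho>. (\<forall>x. \<rho> x \<in> dd_carrier n) \<longrightarrow> eval_trm ?A \<rho> s = eval_trm ?A \<rho> t)"
    if "wf_trm ?ar s" "wf_trm ?ar t" for s t
    using eqth_identities_of_iff[OF is_alg_dd_alg[OF n] that] by (simp add: dd_alg_def)
  show ?thesis
    unfolding directed_jonsson_def
  proof (intro exI[of _ "dd_trm n"] conjI allI impI)
    show "dd_trm n h \<in> trms_in ?ar 3" for h by (rule in_trms)
    show "eqth ?ar (identities_of ?ar ?A) (dd_trm n 0) vx"
      and "eqth ?ar (identities_of ?ar ?A) (dd_trm n n) vz"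
      using n by (auto simp: dd_trm_def intro: eqth.eq_refl)
  next
    fix h assume "h \<le> n"
    then show "eqth ?ar (identities_of ?ar ?A) (app3 (dd_trm n h) vx vy vx) vx"
      using wf_app3[of vx vy vx h]
      by (subst eqth_iff) (auto simp: eval_app3 eval_dd_trm dd_fn_id cong: if_cong)
  next
    fix h assume "h < n"
    then show "eqth ?ar (identities_of ?ar ?A) (app3 (dd_trm n h) vx vz vz) (app3 (dd_trm n (Suc h)) vx vx vz)"
      using n wf_app3[of vx vz vz h] wf_app3[of vx vx vz "Suc h"]
      by (subst eqth_iff) (auto simp: eval_app3 eval_dd_trm dd_fn_step cong: if_cong)
  qed
qed

lemma dd_chain_snd_le:
  fixes e :: "nat \<Rightarrow> dd_elt"
  assumes carrier: "\<And>k. k \<le> m \<Longrightarrow> e k \<in> dd_carrier n \<and> snd (e k) \<noteq> None"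
    and start: "snd (e 0) = Some 0"
    and even_step: "\<And>k. k < m \<Longrightarrow> even k \<Longrightarrow> snd (e k) = snd (e (Suc k))"
    and odd_step: "\<And>k. k < m \<Longrightarrow> odd k \<Longrightarrow> fst (e k) = fst (e (Suc k))"
  shows "Suc (2 * i) \<le> m \<Longrightarrow> snd (e (Suc (2 * i))) = Some q \<Longrightarrow> q \<le> int i"
proof (induction i arbitrary: q)
  case 0
  then show ?case using start even_step[of 0] by simp
next
  case (Suc i)
  let ?k = "Suc (2 * i)"
  obtain q0 where q0: "snd (e ?k) = Some q0" using carrier[of ?k] Suc.prems(1) by auto
  obtain q1 where q1: "snd (e (Suc ?k)) = Some q1" using carrier[of "Suc ?k"] Suc.prems(1) by auto
  have "band (fst (e ?k)) q0" "band (fst (e (Suc ?k))) q1"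
    using carrier[of ?k] carrier[of "Suc ?k"] q0 q1 Suc.prems(1)
    by (auto simp: dd_carrier_def split: prod.splits)
  moreover have "fst (e (Suc ?k)) = fst (e ?k)" using odd_step[of ?k] Suc.prems(1) by simp
  moreover have "q = q1" using even_step[of "Suc ?k"] q1 Suc.prems by simp
  moreover have "q0 \<le> int i" using Suc.IH[OF _ q0] Suc.prems(1) by simp
  ultimately show ?case by (simp add: band_def)
qed

lemma dd_not_reversed_modular:
  assumes n: "2 \<le> n"
  shows "\<not> reversed_modular (\<lambda>_. 3) (identities_of (\<lambda>_. 3) (dd_alg n)) (2 * n - 1)"
proof
  let ?m = "2 * n - 1" and ?S = "dd_carrier n"
  assume rm: "reversed_modular (\<lambda>_. 3) (identities_of (\<lambda>_. 3) (dd_alg n)) ?m"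
  define a :: dd_elt where "a = (0, Some 0)"
  define b :: dd_elt where "b = (0, None)"
  define c :: dd_elt where "c = (int n - 1, None)"
  define d :: dd_elt where "d = (int n - 1, Some (int n))"
  have carrier: "a \<in> ?S" "b \<in> ?S" "c \<in> ?S" "d \<in> ?S"
    using n by (auto simp: a_def b_def c_def d_def dd_carrier_def band_def)
  obtain e where e0: "e 0 = a" and em: "e ?m = d"
    and in_class: "\<And>k. k \<le> ?m \<Longrightarrow> (e k, a) \<in> ker_on ?S (\<lambda>e. snd e = None)"
    and even_step: "\<And>k. k < ?m \<Longrightarrow> even k \<Longrightarrow> (e k, e (Suc k)) \<in> ker_on ?S snd"
    and odd_step: "\<And>k. k < ?m \<Longrightarrow> odd k \<Longrightarrow> (e k, e (Suc k)) \<in> ker_on ?S fst"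
    by (rule reversed_modular_chain[where a = a and b = b and c = c and d = d,
          OF rm in_variety_identities_of[OF is_alg_dd_alg[OF n]]
          congruence_dd_snd_None[OF n] congruence_dd_fst[OF n] congruence_dd_snd[OF n]])
      (use carrier in \<open>auto simp: ker_on_def a_def b_def c_def d_def\<close>)
  have "int n \<le> int (n - 1)"
  proof (rule dd_chain_snd_le)
    show "e k \<in> ?S \<and> snd (e k) \<noteq> None" if "k \<le> ?m" for k
      using in_class[OF that] by (simp add: ker_on_def a_def)
    show "snd (e k) = snd (e (Suc k))" if "k < ?m" "even k" for k
      using even_step[OF that] by (simp add: ker_on_def)
    show "fst (e k) = fst (e (Suc k))" if "k < ?m" "odd k" for k
      using odd_step[OF that] by (simp add: ker_on_def)
    show "snd (e 0) = Some 0" using e0 by (simp add: a_def)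
    show "Suc (2 * (n - 1)) \<le> ?m" using n by simp
    show "snd (e (Suc (2 * (n - 1)))) = Some (int n)"
      using em n by (simp add: d_def Suc_diff_Suc numeral_2_eq_2)
  qed
  with n show False by simp
qed

lemma dd_not_day_modular:
  assumes n: "2 \<le> n"
  shows "\<not> day_modular (\<lambda>_. 3) (identities_of (\<lambda>_. 3) (dd_alg n)) (2 * n - 2)"
proof
  assume "day_modular (\<lambda>_. 3) (identities_of (\<lambda>_. 3) (dd_alg n)) (2 * n - 2)"
  then have "reversed_modular (\<lambda>_. 3) (identities_of (\<lambda>_. 3) (dd_alg n)) (Suc (2 * n - 2))"
    by (rule day_modular_imp_reversed_modular)
  moreover have "Suc (2 * n - 2) = 2 * n - 1" using n by simp
  ultimately show False using dd_not_reversed_modular[OF n] by simp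
qed

lemma locally_finite_dd: "2 \<le> n \<Longrightarrow> locally_finite (\<lambda>_. 3) (identities_of (\<lambda>_. 3) (dd_alg n))"
  using locally_finite_identities_of[OF is_alg_dd_alg, of n "(0, None)"] finite_dd_carrier
  by (simp add: dd_alg_def dd_carrier_def)

theorem theorem5p1:
  shows "(\<forall>n::nat. n \<ge> 2 \<longrightarrow>
            (\<exists>(ar :: nat \<Rightarrow> nat) E. variety ar E \<and> locally_finite ar E \<and>
               directed_jonsson ar E n \<and>
               \<not> reversed_modular ar E (2 * n - 1) \<and> \<not> day_modular ar E (2 * n - 2)))
       \<and> (\<forall>(ar :: 'f \<Rightarrow> nat) E (n::nat). variety ar E \<and> directed_jonsson ar E n \<longrightarrow>
            (\<forall>(A :: ('a, 'f) alg) \<alpha> \<beta> \<gamma>. in_variety ar E A \<and>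
                congruence ar A \<alpha> \<and> congruence ar A \<beta> \<and> congruence ar A \<gamma> \<longrightarrow>
                \<alpha> \<inter> (\<beta> O \<gamma> O \<beta>) \<subseteq> alt_comp (\<alpha> \<inter> \<beta>) (\<alpha> \<inter> \<gamma>) (2 * n - 1))
            \<and> day_modular ar E (2 * n - 1))"
proof (intro conjI allI impI)
  fix n :: nat assume "n \<ge> 2"
  then show "\<exists>(ar :: nat \<Rightarrow> nat) E. variety ar E \<and> locally_finite ar E \<and>
      directed_jonsson ar E n \<and> \<not> reversed_modular ar E (2 * n - 1) \<and> \<not> day_modular ar E (2 * n - 2)"
    using variety_identities_of locally_finite_dd directed_jonsson_dd dd_not_reversed_modular
      dd_not_day_modular by blast
next
  fix ar :: "'f \<Rightarrow> nat" and E n assume "variety ar E \<and> directed_jonsson ar E n"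
  then have dj: "directed_jonsson ar E n" by simp
  show "day_modular ar E (2 * n - 1)" using directed_jonsson_imp_day_modular[OF dj] .
  fix A :: "('a, 'f) alg" and \<alpha> \<beta> \<gamma>
  assume "in_variety ar E A \<and> congruence ar A \<alpha> \<and> congruence ar A \<beta> \<and> congruence ar A \<gamma>"
  then show "\<alpha> \<inter> (\<beta> O \<gamma> O \<beta>) \<subseteq> alt_comp (\<alpha> \<inter> \<beta>) (\<alpha> \<inter> \<gamma>) (2 * n - 1)"
    using directed_jonsson_congruence_identity[OF dj] by blast
qed

end
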